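(* A $po$-$\Gamma$-semigroup $M$ is regular if and only if for every fuzzy subset $f$ of $M$ we have $f\preceq (f\circ 1)\circ f$.
   Context: Let $M$ and $\Gamma$ be nonempty sets with a map $M\times\Gamma\times M\to M$, $(a,\gamma,b)\mapsto a\gamma b$, satisfying $(a\gamma b)\mu c=a\gamma(b\mu c)$ for all $a,b,c\in M$, $\gamma,\mu\in\Gamma$. A $po$-$\Gamma$-semigroup is such an $M$ with a partial order $\le$ such that $a\le b$ implies $a\gamma c\le b\gamma c$ and $c\gamma a\le c\gamma b$ for all $c\in M$, $\gamma\in\Gamma$. For $H\subseteq M$, $(H]=\{t\in M: t\le h \text{ for some } h\in H\}$; $a\Gamma M\Gamma a=\{a\gamma x\mu a: x\in M,\gamma,\mu\in\Gamma\}$. $M$ is regular if $a\in(a\Gamma M\Gamma a]$ for every $a\in M$. A fuzzy subset of $M$ is a map $M\to[0,1]$; $1$ is the constant fuzzy subset with value $1$. For $c\in M$ let $A_c=\{(y,z)\in M\times M: c\le y\gamma z \text{ for some }\gamma\in\Gamma\}$. $(f\circ g)(c)=\bigvee_{(y,z)\in A_c}\min\{f(y),g(z)\}$ if $A_c\ne\emptyset$, and $0$ otherwise. $f\preceq g$ means $f(c)\le g(c)$ for all $c\in M$. *)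

theory Defs
  imports Main "HOL.Real"
begin

text \<open>M is the type 'a, Gamma is the type 'g (types are nonempty).
  gm a g b stands for a g b; le is the partial order on M.\<close>

definition po_gamma_semigroup :: "('a \<Rightarrow> 'g \<Rightarrow> 'a \<Rightarrow> 'a) \<Rightarrow> ('a \<Rightarrow> 'a \<Rightarrow> bool) \<Rightarrow> bool" where
  "po_gamma_semigroup gm le \<longleftrightarrow>
     (\<forall>a b c \<gamma> \<mu>. gm (gm a \<gamma> b) \<mu> c = gm a \<gamma> (gm b \<mu> c)) \<and>
     (\<forall>a. le a a) \<and>
     (\<forall>a b. le a b \<and> le b a \<longrightarrow> a = b) \<and>
     (\<forall>a b c. le a b \<and> le b c \<longrightarrow> le a c) \<and>
     (\<forall>a b c \<gamma>. le a b \<longrightarrow> le (gm a \<gamma> c) (gm b \<gamma> c) \<and> le (gm c \<gamma> a) (gm c \<gamma> b))"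

definition down_closure :: "('a \<Rightarrow> 'a \<Rightarrow> bool) \<Rightarrow> 'a set \<Rightarrow> 'a set" where
  "down_closure le H = {t. \<exists>h\<in>H. le t h}"

definition aGMGa :: "('a \<Rightarrow> 'g \<Rightarrow> 'a \<Rightarrow> 'a) \<Rightarrow> 'a \<Rightarrow> 'a set" where
  "aGMGa gm a = {gm (gm a \<gamma> x) \<mu> a | x \<gamma> \<mu>. True}"

definition regular_pgs :: "('a \<Rightarrow> 'g \<Rightarrow> 'a \<Rightarrow> 'a) \<Rightarrow> ('a \<Rightarrow> 'a \<Rightarrow> bool) \<Rightarrow> bool" where
  "regular_pgs gm le \<longleftrightarrow> (\<forall>a. a \<in> down_closure le (aGMGa gm a))"

definition fuzzy_subset :: "('a \<Rightarrow> real) \<Rightarrow> bool" where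
  "fuzzy_subset f \<longleftrightarrow> (\<forall>x. 0 \<le> f x \<and> f x \<le> 1)"

definition A_set :: "('a \<Rightarrow> 'g \<Rightarrow> 'a \<Rightarrow> 'a) \<Rightarrow> ('a \<Rightarrow> 'a \<Rightarrow> bool) \<Rightarrow> 'a \<Rightarrow> ('a \<times> 'a) set" where
  "A_set gm le c = {(y, z). \<exists>\<gamma>. le c (gm y \<gamma> z)}"

definition fuzzy_comp :: "('a \<Rightarrow> 'g \<Rightarrow> 'a \<Rightarrow> 'a) \<Rightarrow> ('a \<Rightarrow> 'a \<Rightarrow> bool) \<Rightarrow> ('a \<Rightarrow> real) \<Rightarrow> ('a \<Rightarrow> real) \<Rightarrow> 'a \<Rightarrow> real" where
  "fuzzy_comp gm le f g c =
     (if A_set gm le c = {} then 0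
      else (SUP p\<in>A_set gm le c. min (f (fst p)) (g (snd p))))"

definition fuzzy_le :: "('a \<Rightarrow> real) \<Rightarrow> ('a \<Rightarrow> real) \<Rightarrow> bool" where
  "fuzzy_le f g \<longleftrightarrow> (\<forall>c. f c \<le> g c)"

end

theory Submission
  imports Defs
begin

text \<open>If \<open>a \<le> a\<gamma>x\<mu>a\<close>, then the pair \<open>(a, x)\<close> shows \<open>(f \<circ> 1)(a\<gamma>x) \<ge> f(a)\<close> and the pair
  \<open>(a\<gamma>x, a)\<close> then shows \<open>((f \<circ> 1) \<circ> f)(a) \<ge> f(a)\<close>. Conversely, applying the inequality to the
  characteristic function of \<open>a\<close> makes \<open>((f \<circ> 1) \<circ> f)(a)\<close> positive, which forces pairs
  \<open>a \<le> y\<mu>a\<close> and \<open>y \<le> a\<gamma>v\<close>; monotonicity gives \<open>a \<le> a\<gamma>v\<mu>a\<close>.\<close>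

lemma fuzzy_comp_pos_witness:
  assumes "fuzzy_comp gm le f g c > 0"
  obtains y z where "(y, z) \<in> A_set gm le c" and "f y > 0" and "g z > 0"
proof -
  have ne: "A_set gm le c \<noteq> {}"
    using assms by (auto simp: fuzzy_comp_def)
  have "\<exists>p\<in>A_set gm le c. min (f (fst p)) (g (snd p)) > 0"
  proof (rule ccontr)
    assume "\<not> ?thesis"
    then have "(SUP p\<in>A_set gm le c. min (f (fst p)) (g (snd p))) \<le> 0"
      using ne by (intro cSUP_least) (auto simp: not_less)
    then show False
      using assms ne by (simp add: fuzzy_comp_def)
  qed
  then show thesis
    using that by auto
qed

lemma fuzzy_comp_le_one:
  assumes "\<And>x. f x \<le> 1"
  shows "fuzzy_comp gm le f g c \<le> 1"
proof (cases "A_set gm le c = {}")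
  case False
  then have "(SUP p\<in>A_set gm le c. min (f (fst p)) (g (snd p))) \<le> 1"
    using assms by (intro cSUP_least) (auto simp: min_le_iff_disj)
  then show ?thesis
    using False by (simp add: fuzzy_comp_def)
qed (simp add: fuzzy_comp_def)

lemma min_le_fuzzy_comp:
  assumes "\<And>x. f x \<le> B" and "(y, z) \<in> A_set gm le c"
  shows "min (f y) (g z) \<le> fuzzy_comp gm le f g c"
proof -
  have ne: "A_set gm le c \<noteq> {}"
    using assms(2) by auto
  have "bdd_above ((\<lambda>p. min (f (fst p)) (g (snd p))) ` A_set gm le c)"
    using assms(1) by (intro bdd_aboveI[where M = B]) (auto simp: min_le_iff_disj)
  then have "min (f (fst (y, z))) (g (snd (y, z)))
      \<le> (SUP p\<in>A_set gm le c. min (f (fst p)) (g (snd p)))"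
    using assms(2) by (intro cSUP_upper) auto
  then show ?thesis
    using ne by (simp add: fuzzy_comp_def)
qed

lemma regular_imp_fuzzy_le_comp:
  assumes "po_gamma_semigroup gm le" and "regular_pgs gm le" and "fuzzy_subset f"
  shows "fuzzy_le f (fuzzy_comp gm le (fuzzy_comp gm le f (\<lambda>_. 1)) f)"
  unfolding fuzzy_le_def
proof
  fix a
  let ?f1 = "fuzzy_comp gm le f (\<lambda>_. 1)"
  have f_le_1: "\<And>x. f x \<le> 1"
    using assms(3) by (simp add: fuzzy_subset_def)
  obtain x \<gamma> \<mu> where a_le: "le a (gm (gm a \<gamma> x) \<mu> a)"
    using assms(2) unfolding regular_pgs_def down_closure_def aGMGa_def by blast
  have "le (gm a \<gamma> x) (gm a \<gamma> x)"
    using assms(1) by (simp add: po_gamma_semigroup_def)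
  then have "(a, x) \<in> A_set gm le (gm a \<gamma> x)"
    by (auto simp: A_set_def)
  then have "min (f a) 1 \<le> ?f1 (gm a \<gamma> x)"
    by (rule min_le_fuzzy_comp[OF f_le_1])
  then have fa_le: "f a \<le> ?f1 (gm a \<gamma> x)"
    using f_le_1[of a] by simp
  have "(gm a \<gamma> x, a) \<in> A_set gm le a"
    using a_le by (auto simp: A_set_def)
  then have "min (?f1 (gm a \<gamma> x)) (f a) \<le> fuzzy_comp gm le ?f1 f a"
    by (rule min_le_fuzzy_comp[OF fuzzy_comp_le_one[OF f_le_1]])
  then show "f a \<le> fuzzy_comp gm le ?f1 f a"
    using fa_le by linarith
qed

lemma fuzzy_le_comp_imp_regular:
  assumes "po_gamma_semigroup gm le"
    and "\<And>f. fuzzy_subset f \<Longrightarrow> fuzzy_le f (fuzzy_comp gm le (fuzzy_comp gm le f (\<lambda>_. 1)) f)"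
  shows "regular_pgs gm le"
  unfolding regular_pgs_def
proof
  fix a
  define f :: "'a \<Rightarrow> real" where "f = (\<lambda>x. if x = a then 1 else 0)"
  have "fuzzy_subset f"
    by (simp add: f_def fuzzy_subset_def)
  then have "f a \<le> fuzzy_comp gm le (fuzzy_comp gm le f (\<lambda>_. 1)) f a"
    using assms(2) by (simp add: fuzzy_le_def)
  then have "fuzzy_comp gm le (fuzzy_comp gm le f (\<lambda>_. 1)) f a > 0"
    by (simp add: f_def)
  then obtain y z where yz: "(y, z) \<in> A_set gm le a"
    and y_pos: "fuzzy_comp gm le f (\<lambda>_. 1) y > 0" and "f z > 0"
    by (rule fuzzy_comp_pos_witness)
  then obtain \<mu> where a_le: "le a (gm y \<mu> a)"
    by (auto simp: A_set_def f_def split: if_splits)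
  from y_pos obtain u v where "(u, v) \<in> A_set gm le y" and "f u > 0"
    by (rule fuzzy_comp_pos_witness)
  then obtain \<gamma> where y_le: "le y (gm a \<gamma> v)"
    by (auto simp: A_set_def f_def split: if_splits)
  have "le (gm y \<mu> a) (gm (gm a \<gamma> v) \<mu> a)"
    using assms(1) y_le unfolding po_gamma_semigroup_def by blast
  then have "le a (gm (gm a \<gamma> v) \<mu> a)"
    using assms(1) a_le unfolding po_gamma_semigroup_def by blast
  then show "a \<in> down_closure le (aGMGa gm a)"
    unfolding down_closure_def aGMGa_def by auto
qed

theorem theorem23:
  fixes gm :: "'a \<Rightarrow> 'g \<Rightarrow> 'a \<Rightarrow> 'a" and le :: "'a \<Rightarrow> 'a \<Rightarrow> bool"
  assumes "po_gamma_semigroup gm le"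
  shows "regular_pgs gm le \<longleftrightarrow>
    (\<forall>f. fuzzy_subset f \<longrightarrow>
       fuzzy_le f (fuzzy_comp gm le (fuzzy_comp gm le f (\<lambda>_. 1)) f))"
  using regular_imp_fuzzy_le_comp[OF assms] fuzzy_le_comp_imp_regular[OF assms] by blast

end
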